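(* Let $(\mathbb{R}^d,H,\mathcal{L})$ be a cut-and-project scheme such that $\mathcal{L}$ and $\mathcal{L}^\circ$ are both countable. Let $D$ be a lattice in $\mathbb{R}^d$ such that $D\cap\pi^G(\mathcal{L})=\{0\}$ and $D^\circ\cap\pi^{\widehat G}(\mathcal{L}^\circ)=\{0\}$, let $\mathbb{K}=\mathbb{R}^d/D$ with quotient map $\psi:\mathbb{R}^d\to\mathbb{K}$. Then the map $\phi:\pi^G(\mathcal{L})\to H\times\mathbb{K}$, $\phi(x)=(x^\star,\psi(x))$, has dense range.
   Context: $G=\mathbb{R}^d$. A cut-and-project scheme $(G,H,\mathcal{L})$ consists of locally compact abelian groups $G,H$ and a discrete cocompact subgroup $\mathcal{L}\subseteq G\times H$ such that $\pi^G|_{\mathcal{L}}$ is injective and $\pi^H(\mathcal{L})$ is dense in $H$. The $\star$-map on $\pi^G(\mathcal{L})$ is $x^\star=\pi^H((\pi^G|_{\mathcal{L}})^{-1}(x))$. The dual group $\widehat G$ is identified with $\mathbb{R}^d$ via $x\mapsto(y\mapsto e^{2\pi i\langle x,y\rangle})$; $\mathcal{L}^\circ\subseteq\widehat G\times\widehat H$ is the annihilator of $\mathcal L$ and $\pi^{\widehat G}$ the projection to $\widehat G$. For a lattice $D$, $D^\circ=\{x\in\mathbb{R}^d:\langle y,x\rangle\in\mathbb{Z}\ \forall y\in D\}$. *)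

theory Defs
  imports "HOL-Analysis.Analysis"
begin

definition add_subgroup :: "'a::ab_group_add set \<Rightarrow> bool" where
  "add_subgroup S \<longleftrightarrow> 0 \<in> S \<and> (\<forall>a\<in>S. \<forall>b\<in>S. a + b \<in> S) \<and> (\<forall>a\<in>S. - a \<in> S)"

definition discrete_set :: "'a::topological_space set \<Rightarrow> bool" where
  "discrete_set S \<longleftrightarrow> (\<forall>z\<in>S. \<exists>U. open U \<and> U \<inter> S = {z})"

definition cocompact_set :: "'a::{topological_space, ab_group_add} set \<Rightarrow> bool" where
  "cocompact_set S \<longleftrightarrow> (\<exists>K. compact K \<and> (\<forall>w. \<exists>k\<in>K. \<exists>l\<in>S. w = k + l))"

definition cut_and_project :: "((real^'n::finite) \<times> 'h::{topological_ab_group_add, t2_space}) set \<Rightarrow> bool" where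
  "cut_and_project L \<longleftrightarrow>
     locally_compact_space (euclidean :: 'h topology) \<and>
     add_subgroup L \<and> discrete_set L \<and> cocompact_set L \<and>
     inj_on fst L \<and> closure (snd ` L) = UNIV"

definition star_map :: "('a \<times> 'h) set \<Rightarrow> 'a \<Rightarrow> 'h" where
  "star_map L x = snd (THE z. z \<in> L \<and> fst z = x)"

definition character :: "('h::topological_ab_group_add \<Rightarrow> complex) \<Rightarrow> bool" where
  "character \<eta> \<longleftrightarrow> continuous_on UNIV \<eta> \<and> (\<forall>x. norm (\<eta> x) = 1) \<and>
     (\<forall>a b. \<eta> (a + b) = \<eta> a * \<eta> b)"

text \<open>Annihilator of L in (dual of R^d) x (dual of H), the dual of R^d being identified
  with R^d via y \<mapsto> (x \<mapsto> exp(2 pi i <y,x>)).\<close>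

definition annihilator :: "((real^'n::finite) \<times> 'h::topological_ab_group_add) set \<Rightarrow> ((real^'n::finite) \<times> ('h \<Rightarrow> complex)) set" where
  "annihilator L = {(y, \<eta>). character \<eta> \<and>
     (\<forall>(x, h)\<in>L. cis (2 * pi * (y \<bullet> x)) * \<eta> h = 1)}"

definition lattice :: "(real^'n::finite) set \<Rightarrow> bool" where
  "lattice D \<longleftrightarrow> add_subgroup D \<and> discrete_set D \<and> cocompact_set D"

definition dual_lattice :: "(real^'n::finite) set \<Rightarrow> (real^'n::finite) set" where
  "dual_lattice D = {x. \<forall>y\<in>D. y \<bullet> x \<in> \<int>}"

text \<open>The quotient map R^d \<rightarrow> R^d / D, cosets represented as sets.\<close>

definition coset_map :: "(real^'n::finite) set \<Rightarrow> real^'n \<Rightarrow> (real^'n::finite) set" where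
  "coset_map D x = (\<lambda>d. x + d) ` D"

end

theory Submission
  imports Defs
begin

text \<open>Let C be the closure of L + (D \<times> {0}) in R^d \<times> H; it is a closed subgroup, and its
  section V = {v. (v, 0) \<in> C} is a closed subgroup of R^d containing D. A proper closed
  subgroup of R^d is annihilated by some y \<noteq> 0, i.e. y \<bullet> V \<subseteq> \<int> (by induction on the
  dimension: split off a line contained in V, or project along a shortest vector of V). So if
  V were proper, y would lie in the dual lattice of D, and x\<star> \<mapsto> e(-y \<bullet> x) would be a well
  defined character on the dense subgroup snd ` L, uniformly continuous because R^d / D is
  compact. It extends to a character \<eta> of H with (y, \<eta>) in the annihilator of L, contradicting
  dual_lattice D \<inter> fst ` annihilator L = {0}.\<close>

lemma add_subgroup_diff: "add_subgroup V \<Longrightarrow> a \<in> V \<Longrightarrow> b \<in> V \<Longrightarrow> a - b \<in> V"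
  unfolding add_subgroup_def by (metis diff_conv_add_uminus)

lemma add_subgroup_of_int_scaleR:
  fixes v :: "'a::real_vector"
  assumes sg: "add_subgroup V" and v: "v \<in> V"
  shows "of_int k *\<^sub>R v \<in> V"
proof (induction k rule: int_induct[where k = 0])
  case base
  then show ?case using sg by (simp add: add_subgroup_def)
next
  case (step1 i)
  have "of_int (i + 1) *\<^sub>R v = of_int i *\<^sub>R v + v"
    by (simp add: scaleR_add_left)
  then show ?case using step1 sg v unfolding add_subgroup_def by simp
next
  case (step2 i)
  have "of_int (i - 1) *\<^sub>R v = of_int i *\<^sub>R v - v"
    by (simp add: scaleR_diff_left)
  then show ?case using step2 add_subgroup_diff[OF sg _ v] by simp
qed

lemma add_subgroup_linear_image:
  assumes f: "linear f" and sg: "add_subgroup V"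
  shows "add_subgroup (f ` V)"
  unfolding add_subgroup_def
proof (intro conjI ballI)
  show "0 \<in> f ` V"
    using sg linear_0[OF f] unfolding add_subgroup_def by force
next
  fix a b assume "a \<in> f ` V" "b \<in> f ` V"
  then obtain x y where "x \<in> V" "y \<in> V" "a = f x" "b = f y" by blast
  moreover have "f x + f y = f (x + y)" "- f x = f (- x)"
    using f by (simp_all add: linear_add linear_neg)
  ultimately show "a + b \<in> f ` V" "- a \<in> f ` V"
    using sg unfolding add_subgroup_def by auto
qed

subsection \<open>Closed subgroups of Euclidean space\<close>

definition proj_perp :: "'a::real_inner \<Rightarrow> 'a \<Rightarrow> 'a" where
  "proj_perp u x = x - ((u \<bullet> x) / (u \<bullet> u)) *\<^sub>R u"

lemma linear_proj_perp: "linear (proj_perp u)"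
proof (rule linearI)
  show "proj_perp u (x + y) = proj_perp u x + proj_perp u y" for x y
    by (simp add: proj_perp_def inner_add_right add_divide_distrib scaleR_add_left)
  show "proj_perp u (c *\<^sub>R x) = c *\<^sub>R proj_perp u x" for c x
    by (simp add: proj_perp_def scaleR_diff_right)
qed

lemma inner_proj_perp_self: "u \<bullet> proj_perp u x = 0"
  by (cases "u = 0") (simp_all add: proj_perp_def inner_diff_right)

lemma proj_perp_decomp: "x = proj_perp u x + ((u \<bullet> x) / (u \<bullet> u)) *\<^sub>R u"
  by (simp add: proj_perp_def)

lemma proj_perp_scaleR_self: "proj_perp u (c *\<^sub>R u) = 0"
  by (cases "u = 0") (simp_all add: proj_perp_def)

lemma inner_proj_perp: "u \<bullet> y = 0 \<Longrightarrow> y \<bullet> proj_perp u x = y \<bullet> x"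
  by (simp add: proj_perp_def inner_diff_right inner_commute)

lemma proj_perp_in_subspace: "subspace S \<Longrightarrow> u \<in> S \<Longrightarrow> x \<in> S \<Longrightarrow> proj_perp u x \<in> S"
  unfolding proj_perp_def by (intro subspace_diff subspace_scale) auto

lemma dim_Int_hyperplane_less:
  fixes S :: "'a::euclidean_space set"
  assumes "subspace S" "u \<in> S" "u \<noteq> 0"
  shows "dim (S \<inter> {x. u \<bullet> x = 0}) < dim S"
proof (rule dim_psubset)
  have "u \<notin> {x. u \<bullet> x = 0}"
    using assms(3) by simp
  then have "S \<inter> {x. u \<bullet> x = 0} \<subset> S"
    using assms(2) by blast
  moreover have "span (S \<inter> {x. u \<bullet> x = 0}) = S \<inter> {x. u \<bullet> x = 0}" "span S = S"
    using assms by (simp_all add: span_eq_iff[THEN iffD2] subspace_inter subspace_hyperplane)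
  ultimately show "span (S \<inter> {x. u \<bullet> x = 0}) \<subset> span S"
    by (simp only:)
qed

lemma closed_subgroup_contains_limit_direction:
  fixes V :: "'a::real_normed_vector set"
  assumes cV: "closed V" and sg: "add_subgroup V" and v: "\<And>n. v n \<in> V"
    and short: "(\<lambda>n. norm (v n)) \<longlonglongrightarrow> 0" and dir: "(\<lambda>n. v n /\<^sub>R norm (v n)) \<longlonglongrightarrow> u"
  shows "t *\<^sub>R u \<in> V"
proof -
  \<comment> \<open>integer multiples of the ever shorter vectors v n approximate t u\<close>
  define w where "w n = of_int \<lfloor>t / norm (v n)\<rfloor> *\<^sub>R v n" for n
  have wV: "w n \<in> V" for n
    unfolding w_def using add_subgroup_of_int_scaleR[OF sg v] .
  have "norm (w n - t *\<^sub>R (v n /\<^sub>R norm (v n))) \<le> norm (v n)" for n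
  proof -
    have "w n - t *\<^sub>R (v n /\<^sub>R norm (v n)) = (of_int \<lfloor>t / norm (v n)\<rfloor> - t / norm (v n)) *\<^sub>R v n"
      by (simp add: w_def scaleR_diff_left divide_inverse mult.commute)
    moreover have "\<bar>of_int \<lfloor>t / norm (v n)\<rfloor> - t / norm (v n)\<bar> \<le> 1"
      by linarith
    ultimately show ?thesis by (simp add: mult_left_le_one_le)
  qed
  then have "(\<lambda>n. w n - t *\<^sub>R (v n /\<^sub>R norm (v n))) \<longlonglongrightarrow> 0"
    by (intro Lim_null_comparison[OF _ short] always_eventually allI)
  moreover have "(\<lambda>n. t *\<^sub>R (v n /\<^sub>R norm (v n))) \<longlonglongrightarrow> t *\<^sub>R u"
    using dir by (intro tendsto_scaleR tendsto_const)
  ultimately have "(\<lambda>n. (w n - t *\<^sub>R (v n /\<^sub>R norm (v n))) + t *\<^sub>R (v n /\<^sub>R norm (v n)))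
      \<longlonglongrightarrow> 0 + t *\<^sub>R u"
    by (rule tendsto_add)
  then have "w \<longlonglongrightarrow> t *\<^sub>R u" by simp
  then show ?thesis using closed_sequentially[OF cV] wV by blast
qed

lemma closed_subgroup_contains_line:
  fixes V :: "'a::euclidean_space set"
  assumes cV: "closed V" and sg: "add_subgroup V"
    and small: "\<forall>r>0. \<exists>v\<in>V. v \<noteq> 0 \<and> norm v < r"
  shows "\<exists>u\<in>span V. norm u = 1 \<and> (\<forall>t. t *\<^sub>R u \<in> V)"
proof -
  have "\<forall>n. \<exists>x. x \<in> V \<and> x \<noteq> 0 \<and> norm x < 1 / Suc n"
  proof
    fix n :: nat
    have "1 / real (Suc n) > 0" by simp
    then show "\<exists>x. x \<in> V \<and> x \<noteq> 0 \<and> norm x < 1 / Suc n" using small by blast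
  qed
  from choice[OF this] obtain v where v: "\<And>n. v n \<in> V \<and> v n \<noteq> 0 \<and> norm (v n) < 1 / Suc n"
    by blast
  have "seq_compact (span V \<inter> sphere 0 1)"
    by (intro compact_imp_seq_compact closed_Int_compact closed_subspace subspace_span compact_sphere)
  moreover have "\<forall>n. v n /\<^sub>R norm (v n) \<in> span V \<inter> sphere 0 1"
  proof
    fix n
    have "v n \<in> span V" using v span_base by blast
    then show "v n /\<^sub>R norm (v n) \<in> span V \<inter> sphere 0 1" using v[of n] by (simp add: span_scale)
  qed
  ultimately obtain u r where u: "u \<in> span V \<inter> sphere 0 1" and r: "strict_mono r"
    and dir: "((\<lambda>n. v n /\<^sub>R norm (v n)) \<circ> r) \<longlonglongrightarrow> u"
    by (rule seq_compactE)
  have "v \<longlonglongrightarrow> 0"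
    by (rule LIMSEQ_norm_0) (use v in blast)
  then have "(\<lambda>n. v (r n)) \<longlonglongrightarrow> 0"
    using LIMSEQ_subseq_LIMSEQ[OF _ r] by (simp add: o_def)
  then have "(\<lambda>n. norm (v (r n))) \<longlonglongrightarrow> 0"
    by (rule tendsto_norm_zero)
  then have "t *\<^sub>R u \<in> V" for t
    using closed_subgroup_contains_limit_direction[OF cV sg, of "v \<circ> r"] v dir by (simp add: o_def)
  then show ?thesis using u by auto
qed

lemma separated_subgroup_finite_cball:
  fixes V :: "'a::euclidean_space set"
  assumes sg: "add_subgroup V" and r: "r > 0"
    and sep: "\<forall>v\<in>V. v \<noteq> 0 \<longrightarrow> r \<le> norm v"
  shows "finite (V \<inter> cball 0 R)"
proof (rule ccontr)
  assume "infinite (V \<inter> cball 0 R)"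
  then obtain x where "x islimpt (V \<inter> cball 0 R)"
    using bounded_infinite_imp_islimpt[of _ "V \<inter> cball 0 R"] bounded_Int bounded_cball by blast
  then have lp: "x islimpt V" using islimpt_subset by blast
  obtain a where a: "a \<in> V" "a \<noteq> x" "dist a x < r/2"
    using lp r islimpt_approachable half_gt_zero by blast
  obtain b where b: "b \<in> V" "b \<noteq> x" "dist b x < min (r/2) (dist a x)"
    using lp a islimpt_approachable[of x V] by (metis dist_pos_lt min_less_iff_conj half_gt_zero r)
  have "a - b \<in> V" "a - b \<noteq> 0"
    using add_subgroup_diff[OF sg a(1) b(1)] b(3) by auto
  then have "r \<le> norm (a - b)" using sep by blast
  moreover have "norm (a - b) \<le> dist a x + dist b x"
    by (metis dist_norm dist_triangle2 dist_commute)
  ultimately show False using a b by simp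
qed

lemma closed_if_finite_Int_cball:
  fixes V :: "'a::euclidean_space set"
  assumes "\<And>R. finite (V \<inter> cball 0 R)"
  shows "closed V"
  unfolding closed_limpt
proof (intro allI impI)
  fix x assume "x islimpt V"
  then have "infinite (V \<inter> ball x 1)"
    unfolding islimpt_eq_infinite_ball by (meson zero_less_one)
  moreover have "V \<inter> ball x 1 \<subseteq> V \<inter> cball 0 (norm x + 1)"
  proof
    fix y assume y: "y \<in> V \<inter> ball x 1"
    then have "norm (y - x) < 1" by (simp add: dist_norm norm_minus_commute)
    then show "y \<in> V \<inter> cball 0 (norm x + 1)"
      using norm_triangle_sub[of y x] y by simp
  qed
  ultimately show "x \<in> V" using assms finite_subset by blast
qed

lemma infinite_subspace_Int_cball:
  fixes z :: "'a::real_normed_vector"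
  assumes "subspace T" "z \<in> T" "z \<noteq> 0"
  shows "infinite (T \<inter> cball 0 (norm z))"
proof
  define f where "f n = (1 / real (Suc n)) *\<^sub>R z" for n
  assume "finite (T \<inter> cball 0 (norm z))"
  moreover have "range f \<subseteq> T \<inter> cball 0 (norm z)"
    using assms by (auto simp: f_def subspace_scale divide_le_eq)
  ultimately have "finite (range f)" using finite_subset by blast
  moreover have "inj f" unfolding inj_def f_def using assms(3) by auto
  ultimately show False using finite_imageD by blast
qed

lemma separated_subgroup_shortest:
  fixes V :: "'a::euclidean_space set"
  assumes "add_subgroup V" "r > 0" "\<forall>v\<in>V. v \<noteq> 0 \<longrightarrow> r \<le> norm v" "V \<noteq> {0}"
  shows "\<exists>w\<in>V. w \<noteq> 0 \<and> (\<forall>x\<in>V. x \<noteq> 0 \<longrightarrow> norm w \<le> norm x)"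
proof -
  obtain v where v: "v \<in> V" "v \<noteq> 0"
    using assms(1,4) unfolding add_subgroup_def by blast
  define M where "M = V \<inter> cball 0 (norm v) - {0}"
  have "finite M" "v \<in> M"
    using separated_subgroup_finite_cball[OF assms(1-3)] v unfolding M_def by auto
  then obtain w where w: "w \<in> M" "\<forall>x\<in>M. norm w \<le> norm x"
    using arg_min_if_finite[of M norm] by (metis empty_iff not_less)
  then have "norm w \<le> norm v" using \<open>v \<in> M\<close> by blast
  then have "\<forall>x\<in>V. x \<noteq> 0 \<longrightarrow> norm w \<le> norm x"
    using w unfolding M_def by force
  then show ?thesis using w unfolding M_def by blast
qed

lemma subgroup_of_line_dual:
  fixes V :: "'a::euclidean_space set"
  assumes sg: "add_subgroup V" and w: "w \<in> V" "w \<noteq> 0"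
    and shortest: "\<forall>x\<in>V. x \<noteq> 0 \<longrightarrow> norm w \<le> norm x" and line: "V \<subseteq> span {w}"
  shows "\<forall>x\<in>V. ((1 / (w \<bullet> w)) *\<^sub>R w) \<bullet> x \<in> \<int>"
proof
  fix x assume x: "x \<in> V"
  then obtain t where t: "x = t *\<^sub>R w" using line span_singleton by blast
  \<comment> \<open>x - \<lfloor>t\<rfloor> w lies in V and is shorter than w, so it vanishes\<close>
  have "x - of_int \<lfloor>t\<rfloor> *\<^sub>R w = frac t *\<^sub>R w"
    by (simp add: t frac_def scaleR_diff_left)
  moreover have "x - of_int \<lfloor>t\<rfloor> *\<^sub>R w \<in> V"
    using add_subgroup_diff[OF sg x add_subgroup_of_int_scaleR[OF sg w(1)]] .
  moreover have "norm (frac t *\<^sub>R w) < norm w"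
    using frac_lt_1[of t] frac_ge_0[of t] w(2) by simp
  ultimately have "frac t = 0" using shortest w(2) by force
  then have "t \<in> \<int>" using frac_eq_0_iff by blast
  then show "((1 / (w \<bullet> w)) *\<^sub>R w) \<bullet> x \<in> \<int>"
    using w(2) by (simp add: t)
qed

lemma subspace_subset_span_if_Int_hyperplane_trivial:
  assumes "subspace S" "w \<in> S" "S \<inter> {x. w \<bullet> x = 0} = {0}"
  shows "S \<subseteq> span {w}"
proof
  fix s assume "s \<in> S"
  then have "proj_perp w s = 0"
    using assms proj_perp_in_subspace inner_proj_perp_self by blast
  then show "s \<in> span {w}"
    using proj_perp_decomp[of s w] span_singleton by force
qed

lemma separated_subgroup_dual_if_Int_hyperplane_trivial:
  fixes S V :: "'a::euclidean_space set"
  assumes S: "subspace S" and sg: "add_subgroup V" and VS: "V \<subseteq> S" and w: "w \<in> V" "w \<noteq> 0"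
    and shortest: "\<forall>x\<in>V. x \<noteq> 0 \<longrightarrow> norm w \<le> norm x"
    and trivial: "S \<inter> {x. w \<bullet> x = 0} = {0}"
  shows "\<exists>y\<in>S. y \<noteq> 0 \<and> (\<forall>v\<in>V. y \<bullet> v \<in> \<int>)"
proof -
  have "w \<in> S" using w VS by blast
  then have "\<forall>v\<in>V. ((1 / (w \<bullet> w)) *\<^sub>R w) \<bullet> v \<in> \<int>"
    using subgroup_of_line_dual[OF sg w shortest] subspace_subset_span_if_Int_hyperplane_trivial[OF S _ trivial] VS
    by blast
  moreover have "(1 / (w \<bullet> w)) *\<^sub>R w \<in> S" "(1 / (w \<bullet> w)) *\<^sub>R w \<noteq> 0"
    using S \<open>w \<in> S\<close> w(2) by (simp_all add: subspace_scale)
  ultimately show ?thesis by blast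
qed

lemma proj_perp_image_line_subgroup:
  assumes sg: "add_subgroup V" and line: "\<forall>t. t *\<^sub>R u \<in> V"
  shows "proj_perp u ` V = V \<inter> {x. u \<bullet> x = 0}"
proof
  show "proj_perp u ` V \<subseteq> V \<inter> {x. u \<bullet> x = 0}"
    using add_subgroup_diff[OF sg _ line[rule_format]] inner_proj_perp_self
    by (auto simp: proj_perp_def)
  show "V \<inter> {x. u \<bullet> x = 0} \<subseteq> proj_perp u ` V"
    by (force simp: proj_perp_def)
qed

lemma line_subgroup_Int_hyperplane_proper:
  assumes S: "subspace S" and uS: "u \<in> S" and sg: "add_subgroup V"
    and line: "\<forall>t. t *\<^sub>R u \<in> V" and VS: "V \<subseteq> S" "V \<noteq> S"
  shows "V \<inter> {x. u \<bullet> x = 0} \<noteq> S \<inter> {x. u \<bullet> x = 0}"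
proof
  assume eq: "V \<inter> {x. u \<bullet> x = 0} = S \<inter> {x. u \<bullet> x = 0}"
  have "s \<in> V" if "s \<in> S" for s
  proof -
    have "proj_perp u s \<in> V"
      using eq that proj_perp_in_subspace[OF S uS] inner_proj_perp_self by blast
    then show ?thesis
      using proj_perp_decomp[of s u] sg line unfolding add_subgroup_def by metis
  qed
  then show False using VS by blast
qed

lemma finite_proj_perp_Int_cball:
  fixes V :: "'a::euclidean_space set"
  assumes sg: "add_subgroup V" and v: "v \<in> V" and fin: "\<And>R. finite (V \<inter> cball 0 R)"
  shows "finite (proj_perp v ` V \<inter> cball 0 R)"
proof -
  \<comment> \<open>every point of the projection lifts to V within distance norm v of the hyperplane\<close>
  have "proj_perp v ` V \<inter> cball 0 R \<subseteq> proj_perp v ` (V \<inter> cball 0 (R + norm v))"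
  proof
    fix q assume "q \<in> proj_perp v ` V \<inter> cball 0 R"
    then obtain x where x: "x \<in> V" "q = proj_perp v x" "norm q \<le> R" by auto
    define c where "c = (v \<bullet> x) / (v \<bullet> v)"
    define x' where "x' = x - of_int \<lfloor>c\<rfloor> *\<^sub>R v"
    have "x' \<in> V"
      unfolding x'_def using add_subgroup_diff[OF sg x(1) add_subgroup_of_int_scaleR[OF sg v]] .
    have "proj_perp v x' = q"
      using x(2) by (simp add: x'_def linear_diff[OF linear_proj_perp] proj_perp_scaleR_self)
    have "x' = q + frac c *\<^sub>R v"
      using proj_perp_decomp[of x v] x(2) by (simp add: x'_def frac_def c_def scaleR_diff_left)
    then have "norm x' \<le> norm q + frac c * norm v"
      using norm_triangle_ineq[of q "frac c *\<^sub>R v"] frac_ge_0[of c] by simp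
    also have "\<dots> \<le> R + norm v"
      using x(3) frac_lt_1[of c] by (simp add: add_mono mult_left_le_one_le)
    finally show "q \<in> proj_perp v ` (V \<inter> cball 0 (R + norm v))"
      using \<open>x' \<in> V\<close> \<open>proj_perp v x' = q\<close> by force
  qed
  then show ?thesis using fin finite_subset by blast
qed

lemma proj_perp_image_closed_proper_if_line:
  fixes S V :: "'a::euclidean_space set"
  assumes S: "subspace S" and cV: "closed V" and sg: "add_subgroup V" and VS: "V \<subseteq> S" "V \<noteq> S"
    and uS: "u \<in> S" and line: "\<forall>t. t *\<^sub>R u \<in> V"
  shows "closed (proj_perp u ` V)" "proj_perp u ` V \<noteq> S \<inter> {x. u \<bullet> x = 0}"
  using cV line_subgroup_Int_hyperplane_proper[OF S uS sg line VS]
  by (simp_all add: proj_perp_image_line_subgroup[OF sg line] closed_Int closed_hyperplane)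

lemma proj_perp_image_closed_proper_if_separated:
  fixes S V :: "'a::euclidean_space set"
  assumes S: "subspace S" and sg: "add_subgroup V" and r: "r > 0"
    and sep: "\<forall>v\<in>V. v \<noteq> 0 \<longrightarrow> r \<le> norm v" and w: "w \<in> V"
    and z: "z \<in> S \<inter> {x. w \<bullet> x = 0}" "z \<noteq> 0"
  shows "closed (proj_perp w ` V)" "proj_perp w ` V \<noteq> S \<inter> {x. w \<bullet> x = 0}"
proof -
  have fin: "finite (proj_perp w ` V \<inter> cball 0 R)" for R
    using finite_proj_perp_Int_cball[OF sg w separated_subgroup_finite_cball[OF sg r sep]] .
  then show "closed (proj_perp w ` V)"
    by (rule closed_if_finite_Int_cball)
  have "subspace (S \<inter> {x. w \<bullet> x = 0})"
    using S by (simp add: subspace_inter subspace_hyperplane)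
  then show "proj_perp w ` V \<noteq> S \<inter> {x. w \<bullet> x = 0}"
    using fin infinite_subspace_Int_cball[OF _ z] by metis
qed

theorem closed_subgroup_dual:
  fixes S V :: "'a::euclidean_space set"
  assumes "subspace S" "closed V" "add_subgroup V" "V \<subseteq> S" "V \<noteq> S"
  shows "\<exists>y\<in>S. y \<noteq> 0 \<and> (\<forall>v\<in>V. y \<bullet> v \<in> \<int>)"
  using assms
proof (induction "dim S" arbitrary: S V rule: less_induct)
  case less
  note S = less.prems(1) and cV = less.prems(2) and sg = less.prems(3)
    and VS = less.prems(4) and VnS = less.prems(5)
  \<comment> \<open>project V along u into the hyperplane of S orthogonal to u and use induction there\<close>
  have reduce: "\<exists>y\<in>S. y \<noteq> 0 \<and> (\<forall>v\<in>V. y \<bullet> v \<in> \<int>)"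
    if u: "u \<in> S" "u \<noteq> 0" and closed: "closed (proj_perp u ` V)"
      and proper: "proj_perp u ` V \<noteq> S \<inter> {x. u \<bullet> x = 0}" for u
  proof -
    have "subspace (S \<inter> {x. u \<bullet> x = 0})"
      using S by (simp add: subspace_inter subspace_hyperplane)
    moreover have "proj_perp u ` V \<subseteq> S \<inter> {x. u \<bullet> x = 0}"
      using VS S u(1) proj_perp_in_subspace inner_proj_perp_self by blast
    ultimately obtain y where y: "y \<in> S" "u \<bullet> y = 0" "y \<noteq> 0"
      and dual: "\<forall>q\<in>proj_perp u ` V. y \<bullet> q \<in> \<int>"
      using less.hyps[OF dim_Int_hyperplane_less[OF S u] _ closed
          add_subgroup_linear_image[OF linear_proj_perp sg]] proper by blast
    have "\<forall>v\<in>V. y \<bullet> v \<in> \<int>"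
      using dual inner_proj_perp[OF y(2)] by simp
    then show ?thesis using y by blast
  qed
  show ?case
  proof (cases "\<forall>r>0. \<exists>v\<in>V. v \<noteq> 0 \<and> norm v < r")
    case True
    then obtain u where u: "u \<in> span V" "norm u = 1" and line: "\<forall>t. t *\<^sub>R u \<in> V"
      using closed_subgroup_contains_line[OF cV sg] by blast
    have "u \<in> S" using u(1) span_minimal[OF VS S] by blast
    moreover have "u \<noteq> 0" using u(2) by auto
    ultimately show ?thesis
      using reduce proj_perp_image_closed_proper_if_line[OF S cV sg VS VnS _ line] by blast
  next
    case False
    then obtain r where r: "r > 0" "\<forall>v\<in>V. v \<noteq> 0 \<longrightarrow> r \<le> norm v"
      by (auto simp: not_less)
    show ?thesis
    proof (cases "V = {0}")
      case True
      then obtain y where "y \<in> S" "y \<noteq> 0"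
        using VS VnS S subspace_0 by blast
      then show ?thesis using True by auto
    next
      case False
      then obtain w where w: "w \<in> V" "w \<noteq> 0" and shortest: "\<forall>x\<in>V. x \<noteq> 0 \<longrightarrow> norm w \<le> norm x"
        using separated_subgroup_shortest[OF sg r] by blast
      show ?thesis
      proof (cases "S \<inter> {x. w \<bullet> x = 0} = {0}")
        case True
        then show ?thesis
          using separated_subgroup_dual_if_Int_hyperplane_trivial[OF S sg VS w shortest] by blast
      next
        case False
        have "0 \<in> S \<inter> {x. w \<bullet> x = 0}"
          using subspace_0[OF S] by simp
        then obtain z where z: "z \<in> S \<inter> {x. w \<bullet> x = 0}" "z \<noteq> 0"
          using False by blast
        have "w \<in> S" using w VS by blast
        then show ?thesis
          using reduce[OF _ w(2) proj_perp_image_closed_proper_if_separated[OF S sg r w(1) z]] by blast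
      qed
    qed
  qed
qed

subsection \<open>Extending characters from dense subgroups\<close>

lemma eventually_nhds_translate:
  fixes h :: "'a::topological_ab_group_add"
  assumes "eventually Q (nhds 0)"
  shows "eventually (\<lambda>x. Q (x - h)) (nhds h)"
proof -
  have "((\<lambda>x. x - h) \<longlongrightarrow> h - h) (nhds h)"
    by (intro tendsto_diff filterlim_ident tendsto_const)
  then have "filterlim (\<lambda>x. x - h) (nhds 0) (nhds h)"
    by simp
  then show ?thesis using assms unfolding filterlim_iff by blast
qed

lemma nhds_zero_diff_subset:
  fixes U :: "'a::topological_ab_group_add set"
  assumes "open U" "0 \<in> U"
  shows "\<exists>W. eventually W (nhds 0) \<and> (\<forall>a b. W a \<and> W b \<longrightarrow> a - b \<in> U)"
proof -
  have "((\<lambda>z. fst z - snd z) \<longlongrightarrow> fst ((0::'a), (0::'a)) - snd ((0::'a), (0::'a))) (nhds (0, 0))"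
    by (intro tendsto_diff tendsto_fst[OF filterlim_ident] tendsto_snd[OF filterlim_ident])
  then have "((\<lambda>z. fst z - snd z) \<longlongrightarrow> 0) (nhds ((0::'a), (0::'a)))"
    by simp
  then have "eventually (\<lambda>z. fst z - snd z \<in> U) (nhds ((0::'a), (0::'a)))"
    using assms topological_tendstoD by blast
  then obtain W1 W2 where W: "eventually W1 (nhds 0)" "eventually W2 (nhds 0)"
    and diff: "\<forall>a b. W1 a \<longrightarrow> W2 b \<longrightarrow> a - b \<in> U"
    unfolding nhds_prod eventually_prod_filter by auto
  have "eventually (\<lambda>a. W1 a \<and> W2 a) (nhds 0)"
    using W by (rule eventually_conj)
  then show ?thesis using diff by blast
qed

lemma inf_nhds_principal_ne_bot:
  assumes "x \<in> closure P"
  shows "inf (nhds x) (principal P) \<noteq> bot"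
proof
  assume "inf (nhds x) (principal P) = bot"
  then have "eventually (\<lambda>y. False) (inf (nhds x) (principal P))"
    by simp
  then have "eventually (\<lambda>y. y \<notin> P) (nhds x)"
    unfolding eventually_inf_principal by simp
  then obtain S where "open S" "x \<in> S" "\<forall>y\<in>S. y \<notin> P"
    unfolding eventually_nhds by blast
  then show False using assms closure_iff_nhds_not_empty by blast
qed

lemma continuous_on_limit_along_dense:
  fixes f g :: "'a::topological_space \<Rightarrow> 'b::metric_space"
  assumes dense: "closure P = UNIV"
    and lim: "\<And>h. (f \<longlongrightarrow> g h) (inf (nhds h) (principal P))"
  shows "continuous_on UNIV g"
  unfolding continuous_on_def
proof
  fix h :: 'a
  show "(g \<longlongrightarrow> g h) (at h within UNIV)"
    unfolding tendsto_iff
  proof (intro allI impI)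
    fix e :: real assume "e > 0"
    then have "eventually (\<lambda>x. x \<in> P \<longrightarrow> dist (f x) (g h) < e/2) (nhds h)"
      using lim[of h] unfolding tendsto_iff eventually_inf_principal by (meson half_gt_zero)
    then obtain N where N: "open N" "h \<in> N" "\<forall>x\<in>N. x \<in> P \<longrightarrow> dist (f x) (g h) < e/2"
      unfolding eventually_nhds by blast
    have "dist (g x) (g h) < e" if x: "x \<in> N" for x
    proof -
      have "eventually (\<lambda>p. dist (f p) (g x) < e/2) (inf (nhds x) (principal P))"
        using lim[of x] \<open>e > 0\<close> unfolding tendsto_iff by (meson half_gt_zero)
      moreover have "eventually (\<lambda>p. p \<in> N \<and> p \<in> P) (inf (nhds x) (principal P))"
        using eventually_nhds_in_open[OF N(1) x] unfolding eventually_inf_principal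
        by (rule eventually_mono) simp
      ultimately have "eventually (\<lambda>p. dist (f p) (g x) < e/2 \<and> p \<in> N \<and> p \<in> P)
          (inf (nhds x) (principal P))"
        by (rule eventually_conj)
      moreover have "inf (nhds x) (principal P) \<noteq> bot"
        using dense inf_nhds_principal_ne_bot by blast
      ultimately obtain p where p: "dist (f p) (g x) < e/2" "p \<in> N" "p \<in> P"
        using eventually_happens' by blast
      have "dist (g x) (g h) \<le> dist (f p) (g x) + dist (f p) (g h)"
        by (rule dist_triangle3)
      then show ?thesis using N(3) p by fastforce
    qed
    then show "eventually (\<lambda>x. dist (g x) (g h) < e) (at h within UNIV)"
      using eventually_at_topological N(1,2) by blast
  qed
qed

definition group_uniformly_continuous_on ::
    "'a::topological_ab_group_add set \<Rightarrow> ('a \<Rightarrow> 'b::metric_space) \<Rightarrow> bool" where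
  "group_uniformly_continuous_on P f \<longleftrightarrow>
     (\<forall>e>0. \<exists>U. open U \<and> 0 \<in> U \<and> (\<forall>p\<in>P. \<forall>q\<in>P. p - q \<in> U \<longrightarrow> dist (f p) (f q) < e))"

lemma convergent_along_if_group_uniformly_continuous:
  fixes f :: "'a::topological_ab_group_add \<Rightarrow> 'b::complete_space"
  assumes unif: "group_uniformly_continuous_on P f"
  shows "\<exists>c. (f \<longlongrightarrow> c) (inf (nhds h) (principal P))"
proof -
  have "cauchy_filter (filtermap f (inf (nhds h) (principal P)))"
    unfolding cauchy_filter_metric_filtermap
  proof (intro allI impI)
    fix e :: real assume "e > 0"
    then obtain U where U: "open U" "0 \<in> U"
      and close: "\<forall>p\<in>P. \<forall>q\<in>P. p - q \<in> U \<longrightarrow> dist (f p) (f q) < e"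
      using unif unfolding group_uniformly_continuous_on_def by blast
    obtain W where W: "eventually W (nhds 0)" and WU: "\<forall>a b. W a \<and> W b \<longrightarrow> a - b \<in> U"
      using nhds_zero_diff_subset[OF U] by blast
    have "eventually (\<lambda>x. x \<in> P \<and> W (x - h)) (inf (nhds h) (principal P))"
      using eventually_nhds_translate[OF W] unfolding eventually_inf_principal
      by (rule eventually_mono) simp
    moreover have "dist (f x) (f y) < e" if "x \<in> P \<and> W (x - h)" "y \<in> P \<and> W (y - h)" for x y
    proof -
      have "(x - h) - (y - h) \<in> U" using WU that by blast
      then show ?thesis using close that by simp
    qed
    ultimately show "\<exists>Q. eventually Q (inf (nhds h) (principal P)) \<and>
        (\<forall>x y. Q x \<and> Q y \<longrightarrow> dist (f x) (f y) < e)"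
      by blast
  qed
  then show ?thesis
    using cauchy_filter_convergent unfolding convergent_filter_iff filterlim_def by blast
qed

lemma tendsto_along_if_group_uniformly_continuous:
  assumes unif: "group_uniformly_continuous_on P f" and p: "p \<in> P"
  shows "(f \<longlongrightarrow> f p) (inf (nhds p) (principal P))"
  unfolding tendsto_iff
proof (intro allI impI)
  fix e :: real assume "e > 0"
  then obtain U where U: "open U" "0 \<in> U"
    and close: "\<forall>p\<in>P. \<forall>q\<in>P. p - q \<in> U \<longrightarrow> dist (f p) (f q) < e"
    using unif unfolding group_uniformly_continuous_on_def by blast
  have "eventually (\<lambda>x. x - p \<in> U) (nhds p)"
    using eventually_nhds_translate[OF eventually_nhds_in_open[OF U]] .
  then show "eventually (\<lambda>x. dist (f x) (f p) < e) (inf (nhds p) (principal P))"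
    unfolding eventually_inf_principal by (rule eventually_mono) (use close p in blast)
qed

lemma group_uniformly_continuous_extension:
  fixes f :: "'a::topological_ab_group_add \<Rightarrow> 'b::complete_space"
  assumes dense: "closure P = UNIV" and unif: "group_uniformly_continuous_on P f"
  shows "\<exists>g. continuous_on UNIV g \<and> (\<forall>p\<in>P. g p = f p)"
proof -
  obtain g where lim: "\<And>h. (f \<longlongrightarrow> g h) (inf (nhds h) (principal P))"
    using convergent_along_if_group_uniformly_continuous[OF unif] by metis
  have "g p = f p" if "p \<in> P" for p
    using tendsto_unique[OF inf_nhds_principal_ne_bot lim tendsto_along_if_group_uniformly_continuous[OF unif that]]
      dense by blast
  moreover have "continuous_on UNIV g"
    using continuous_on_limit_along_dense[OF dense lim] .
  ultimately show ?thesis by blast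
qed

lemma continuous_eq_on_dense:
  fixes \<phi> \<psi> :: "'a::topological_space \<Rightarrow> 'b::t2_space"
  assumes "closure P = UNIV" "continuous_on UNIV \<phi>" "continuous_on UNIV \<psi>" "\<forall>p\<in>P. \<phi> p = \<psi> p"
  shows "\<phi> x = \<psi> x"
proof -
  have "closure P \<subseteq> {x. \<phi> x = \<psi> x}"
    using assms by (intro closure_minimal closed_Collect_eq) auto
  then show ?thesis using assms(1) by blast
qed

lemma extend_character:
  fixes P :: "'a::topological_ab_group_add set" and f :: "'a \<Rightarrow> complex"
  assumes dense: "closure P = UNIV"
    and add: "\<And>p q. p \<in> P \<Longrightarrow> q \<in> P \<Longrightarrow> p + q \<in> P"
    and mult: "\<And>p q. p \<in> P \<Longrightarrow> q \<in> P \<Longrightarrow> f (p + q) = f p * f q"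
    and norm1: "\<And>p. p \<in> P \<Longrightarrow> norm (f p) = 1"
    and unif: "group_uniformly_continuous_on P f"
  shows "\<exists>\<eta>. character \<eta> \<and> (\<forall>p\<in>P. \<eta> p = f p)"
proof -
  obtain \<eta> where cont: "continuous_on UNIV \<eta>" and ext: "\<forall>p\<in>P. \<eta> p = f p"
    using group_uniformly_continuous_extension[OF dense unif] by blast
  have cont_shift: "continuous_on UNIV (\<lambda>x. \<eta> (a + x))" for a
    by (intro continuous_on_compose2[OF cont] continuous_intros) auto
  have "norm (\<eta> x) = 1" for x
    using continuous_eq_on_dense[OF dense continuous_on_norm[OF cont] continuous_on_const] ext norm1
    by simp
  moreover have "\<eta> (a + b) = \<eta> a * \<eta> b" for a b
  proof -
    have cont_mult: "continuous_on UNIV (\<lambda>x. c * \<eta> x)" "continuous_on UNIV (\<lambda>x. \<eta> x * c)" for c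
      using cont by (auto intro: continuous_on_mult continuous_on_const)
    have "\<eta> (p + x) = \<eta> p * \<eta> x" if "p \<in> P" for p x
      using continuous_eq_on_dense[OF dense cont_shift[of p] cont_mult(1)] ext mult add that by simp
    moreover have "continuous_on UNIV (\<lambda>x. \<eta> (x + b))"
      using cont_shift[of b] by (simp add: add.commute)
    ultimately show ?thesis
      using continuous_eq_on_dense[OF dense _ cont_mult(2), of "\<lambda>x. \<eta> (x + b)"] by simp
  qed
  ultimately show ?thesis using cont ext unfolding character_def by blast
qed

subsection \<open>Density of L + (D \<times> {0})\<close>

lemma add_subgroup_closure_prod:
  fixes A :: "('a::topological_ab_group_add \<times> 'b::topological_ab_group_add) set"
  assumes sg: "add_subgroup A"
  shows "add_subgroup (closure A)"
proof -
  have cont_diff: "continuous_on UNIV (\<lambda>x::'a \<times> 'b. x - c)" "continuous_on UNIV (\<lambda>x::'a \<times> 'b. c - x)" for c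
  proof -
    have "(\<lambda>x::'a \<times> 'b. x - c) = (\<lambda>x. (fst x - fst c, snd x - snd c))"
      "(\<lambda>x::'a \<times> 'b. c - x) = (\<lambda>x. (fst c - fst x, snd c - snd x))"
      by (auto simp: prod_eq_iff)
    then show "continuous_on UNIV (\<lambda>x::'a \<times> 'b. x - c)" "continuous_on UNIV (\<lambda>x::'a \<times> 'b. c - x)"
      by (simp_all only:) (intro continuous_intros)+
  qed
  have image_closure: "f ` closure A \<subseteq> closure A" if "continuous_on UNIV f" "f ` A \<subseteq> closure A" for f
    using image_closure_subset[OF continuous_on_subset[OF that(1)] closed_closure that(2)] by blast
  have diff: "a - b \<in> closure A" if "a \<in> closure A" "b \<in> closure A" for a b
  proof -
    have "x - c \<in> closure A" if "x \<in> closure A" "c \<in> A" for x c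
      using image_closure[OF cont_diff(1), of c] add_subgroup_diff[OF sg _ that(2)] closure_subset that(1)
      by blast
    then show ?thesis
      using image_closure[OF cont_diff(2), of a] that by blast
  qed
  have "0 \<in> closure A"
    using sg closure_subset unfolding add_subgroup_def by blast
  moreover have "- a \<in> closure A" if "a \<in> closure A" for a
    using diff[OF \<open>0 \<in> closure A\<close> that] by simp
  moreover have "a + b \<in> closure A" if "a \<in> closure A" "b \<in> closure A" for a b
    using diff[OF that(1) diff[OF \<open>0 \<in> closure A\<close> that(2)]] by simp
  ultimately show ?thesis unfolding add_subgroup_def by blast
qed

lemma tube_disjoint_closed:
  fixes C :: "('a::topological_space \<times> 'b::topological_space) set"
  assumes "closed C" "compact B" "B \<times> {h} \<inter> C = {}"
  shows "\<exists>U. open U \<and> h \<in> U \<and> B \<times> U \<inter> C = {}"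
proof -
  have "openin (prod_topology euclidean euclidean) (- C)"
    using assms(1) by (simp add: open_Compl)
  moreover have "B \<times> {h} \<subseteq> - C"
    using assms(3) by blast
  ultimately obtain U V where "openin euclidean V" "h \<in> V" "U \<times> V \<subseteq> - C" "B \<subseteq> U"
    using tube_lemma_left[of euclidean euclidean "- C" B h] assms(2) by auto
  then show ?thesis by auto
qed

definition e2pi :: "real \<Rightarrow> complex" where
  "e2pi t = cis (2 * pi * t)"

lemma e2pi_add: "e2pi (a + b) = e2pi a * e2pi b"
  by (simp add: e2pi_def cis_mult distrib_left)

lemma e2pi_int: "t \<in> \<int> \<Longrightarrow> e2pi t = 1"
  by (simp add: e2pi_def)

lemma norm_e2pi [simp]: "norm (e2pi t) = 1"
  by (simp add: e2pi_def)

lemma e2pi_eq_if_diff_int: "a - b \<in> \<int> \<Longrightarrow> e2pi a = e2pi b"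
  using e2pi_add[of b "a - b"] e2pi_int by simp

lemma continuous_on_e2pi: "continuous_on S e2pi"
  unfolding e2pi_def by (intro continuous_on_cis continuous_intros)

definition fst_translates :: "('a::ab_group_add \<times> 'b::ab_group_add) set \<Rightarrow> 'a set \<Rightarrow> ('a \<times> 'b) set" where
  "fst_translates L D = {l + (d, 0) | l d. l \<in> L \<and> d \<in> D}"

lemma fst_translates_memI: "l \<in> L \<Longrightarrow> d \<in> D \<Longrightarrow> l + (d, 0) \<in> fst_translates L D"
  unfolding fst_translates_def by blast

lemma subset_fst_translates: "0 \<in> D \<Longrightarrow> L \<subseteq> fst_translates L D"
  using fst_translates_memI[of _ L 0 D] by (force simp: zero_prod_def[symmetric])

lemma fst_translates_zero: "0 \<in> L \<Longrightarrow> d \<in> D \<Longrightarrow> (d, 0) \<in> fst_translates L D"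
  using fst_translates_memI[of 0 L d D] by simp

lemma add_subgroup_fst_translates:
  assumes "add_subgroup L" "add_subgroup D"
  shows "add_subgroup (fst_translates L D)"
  unfolding add_subgroup_def
proof (intro conjI ballI)
  show "0 \<in> fst_translates L D"
    using fst_translates_memI[of 0 L 0 D] assms unfolding add_subgroup_def by (simp add: zero_prod_def)
next
  fix a b assume "a \<in> fst_translates L D" "b \<in> fst_translates L D"
  then obtain l d l' d' where "l \<in> L" "d \<in> D" "l' \<in> L" "d' \<in> D" "a = l + (d, 0)" "b = l' + (d', 0)"
    unfolding fst_translates_def by blast
  moreover have "a + b = (l + l') + (d + d', 0)" "- a = - l + (- d, 0)"
    using calculation by simp_all
  ultimately show "a + b \<in> fst_translates L D" "- a \<in> fst_translates L D"
    using assms fst_translates_memI unfolding add_subgroup_def by metis+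
qed

lemma phase_near_one_if_snd_near_zero:
  fixes L :: "((real^'n::finite) \<times> 'h::topological_ab_group_add) set"
  assumes sgL: "add_subgroup L" and sgD: "add_subgroup D" and ccD: "cocompact_set D"
    and dual: "\<forall>v. (v, 0) \<in> closure (fst_translates L D) \<longrightarrow> y \<bullet> v \<in> \<int>"
    and e: "e > 0"
  shows "\<exists>U. open U \<and> 0 \<in> U \<and> (\<forall>l\<in>L. snd l \<in> U \<longrightarrow> dist (e2pi (y \<bullet> fst l)) 1 < e)"
proof -
  let ?C = "closure (fst_translates L D)"
  obtain K where K: "compact K" "\<And>w. \<exists>k\<in>K. \<exists>d\<in>D. w = k + d"
    using ccD unfolding cocompact_set_def by blast
  define B where "B = K \<inter> {k. e \<le> dist (e2pi (y \<bullet> k)) 1}"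
  have "compact B"
    unfolding B_def using K(1)
    by (intro compact_Int_closed closed_Collect_le continuous_on_compose2[OF continuous_on_e2pi]
        continuous_intros) auto
  moreover have "B \<times> {0} \<inter> ?C = {}"
    using dual e2pi_int e by (fastforce simp: B_def)
  ultimately obtain U where U: "open U" "0 \<in> U" "B \<times> U \<inter> ?C = {}"
    using tube_disjoint_closed[of ?C B 0] by auto
  have "dist (e2pi (y \<bullet> fst l)) 1 < e" if l: "l \<in> L" "snd l \<in> U" for l
  proof -
    \<comment> \<open>reduce fst l modulo D into the compact fundamental domain K\<close>
    obtain k d where kd: "k \<in> K" "d \<in> D" "fst l = k + d" using K(2) by blast
    have "-d \<in> D" "0 \<in> L" using sgD sgL kd(2) unfolding add_subgroup_def by auto
    have "l + (- d, 0) = (k, snd l)"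
      using kd(3) by (simp add: prod_eq_iff)
    then have "(k, snd l) \<in> ?C"
      using fst_translates_memI[OF l(1) \<open>-d \<in> D\<close>] closure_subset by (metis subsetD)
    moreover have "(d, 0) \<in> ?C"
      using fst_translates_zero[OF \<open>0 \<in> L\<close> kd(2)] closure_subset by blast
    ultimately have "k \<notin> B" "y \<bullet> d \<in> \<int>" using U(3) l(2) dual by auto
    then have "dist (e2pi (y \<bullet> k)) 1 < e" using kd(1) unfolding B_def by auto
    moreover have "e2pi (y \<bullet> fst l) = e2pi (y \<bullet> k)"
      using \<open>y \<bullet> d \<in> \<int>\<close> kd(3) by (simp add: inner_add_right e2pi_add e2pi_int)
    ultimately show ?thesis by simp
  qed
  then show ?thesis using U(1,2) by blast
qed

(* The character x\<star> \<mapsto> e(-y \<bullet> x) on snd ` L, with junk values outside snd ` L. *)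
definition induced_phase :: "((real^'n::finite) \<times> 'h) set \<Rightarrow> real^'n \<Rightarrow> 'h \<Rightarrow> complex" where
  "induced_phase L y h = e2pi (- (y \<bullet> fst (SOME l. l \<in> L \<and> snd l = h)))"

lemma induced_phase_snd:
  fixes L :: "((real^'n::finite) \<times> 'h::topological_ab_group_add) set"
  assumes sgL: "add_subgroup L" and D0: "0 \<in> D"
    and dual: "\<forall>v. (v, 0) \<in> closure (fst_translates L D) \<longrightarrow> y \<bullet> v \<in> \<int>"
    and l: "l \<in> L"
  shows "induced_phase L y (snd l) = e2pi (- (y \<bullet> fst l))"
proof -
  define l' where "l' = (SOME l'. l' \<in> L \<and> snd l' = snd l)"
  have l': "l' \<in> L" "snd l' = snd l"
    unfolding l'_def using someI[of "\<lambda>l'. l' \<in> L \<and> snd l' = snd l" l] l by auto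
  have "(fst l - fst l', 0) = l - l'" using l'(2) by (simp add: prod_eq_iff)
  moreover have "l - l' \<in> closure (fst_translates L D)"
    using add_subgroup_diff[OF sgL l l'(1)] subset_fst_translates[OF D0] closure_subset by blast
  ultimately have "y \<bullet> (fst l - fst l') \<in> \<int>"
    using dual by metis
  then have "e2pi (- (y \<bullet> fst l')) = e2pi (- (y \<bullet> fst l))"
    by (intro e2pi_eq_if_diff_int) (simp add: inner_diff_right)
  then show ?thesis unfolding induced_phase_def l'_def .
qed

lemma group_uniformly_continuous_induced_phase:
  fixes L :: "((real^'n::finite) \<times> 'h::topological_ab_group_add) set"
  assumes sgL: "add_subgroup L" and sgD: "add_subgroup D" and ccD: "cocompact_set D"
    and dual: "\<forall>v. (v, 0) \<in> closure (fst_translates L D) \<longrightarrow> y \<bullet> v \<in> \<int>"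
  shows "group_uniformly_continuous_on (snd ` L) (induced_phase L y)"
  unfolding group_uniformly_continuous_on_def
proof (intro allI impI)
  fix e :: real assume "e > 0"
  have phase: "induced_phase L y (snd l) = e2pi (- (y \<bullet> fst l))" if "l \<in> L" for l
    using induced_phase_snd[OF sgL _ dual that] sgD unfolding add_subgroup_def by blast
  obtain U where U: "open U" "0 \<in> U"
    and small: "\<forall>l\<in>L. snd l \<in> U \<longrightarrow> dist (e2pi (y \<bullet> fst l)) 1 < e"
    using phase_near_one_if_snd_near_zero[OF sgL sgD ccD dual \<open>e > 0\<close>] by blast
  have "dist (induced_phase L y p) (induced_phase L y q) < e"
    if pq: "p \<in> snd ` L" "q \<in> snd ` L" "p - q \<in> U" for p q
  proof -
    obtain l l' where l: "l \<in> L" "l' \<in> L" "p = snd l" "q = snd l'" using pq(1,2) by blast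
    define a b where "a = y \<bullet> fst l" and "b = y \<bullet> fst l'"
    have "dist (e2pi (y \<bullet> fst (l - l'))) 1 < e"
      using small[rule_format, OF add_subgroup_diff[OF sgL l(1,2)]] pq(3) l(3,4) by simp
    then have small_phase: "dist (e2pi (a - b)) 1 < e"
      by (simp add: a_def b_def inner_diff_right)
    have "e2pi (- b) = e2pi (- a) * e2pi (a - b)"
      using e2pi_add[of "- a" "a - b"] by simp
    then have "dist (induced_phase L y p) (induced_phase L y q) = norm (e2pi (- a) * (1 - e2pi (a - b)))"
      using phase l by (simp add: a_def b_def dist_norm right_diff_distrib)
    also have "\<dots> = dist (e2pi (a - b)) 1"
      by (simp add: norm_mult dist_norm norm_minus_commute)
    finally show ?thesis using small_phase by simp
  qed
  then show "\<exists>U. open U \<and> 0 \<in> U \<and> (\<forall>p\<in>snd ` L. \<forall>q\<in>snd ` L. p - q \<in> U \<longrightarrow>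
      dist (induced_phase L y p) (induced_phase L y q) < e)"
    using U by blast
qed

lemma annihilator_if_dual_to_section:
  fixes L :: "((real^'n::finite) \<times> 'h::topological_ab_group_add) set"
  assumes sgL: "add_subgroup L" and dense: "closure (snd ` L) = UNIV"
    and sgD: "add_subgroup D" and ccD: "cocompact_set D"
    and dual: "\<forall>v. (v, 0) \<in> closure (fst_translates L D) \<longrightarrow> y \<bullet> v \<in> \<int>"
  shows "\<exists>\<eta>. (y, \<eta>) \<in> annihilator L"
proof -
  have phase: "induced_phase L y (snd l) = e2pi (- (y \<bullet> fst l))" if "l \<in> L" for l
    using induced_phase_snd[OF sgL _ dual that] sgD unfolding add_subgroup_def by blast
  have "\<exists>\<eta>. character \<eta> \<and> (\<forall>p\<in>snd ` L. \<eta> p = induced_phase L y p)"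
  proof (rule extend_character[OF dense])
    fix p q assume "p \<in> snd ` L" "q \<in> snd ` L"
    then obtain l l' where l: "l \<in> L" "l' \<in> L" "p = snd l" "q = snd l'" by blast
    have "l + l' \<in> L" using sgL l unfolding add_subgroup_def by blast
    then show "p + q \<in> snd ` L" using l by force
    show "induced_phase L y (p + q) = induced_phase L y p * induced_phase L y q"
      using phase[OF \<open>l + l' \<in> L\<close>] phase[OF l(1)] phase[OF l(2)] l(3,4)
      by (simp add: inner_add_right e2pi_add[symmetric])
  next
    fix p assume "p \<in> snd ` L"
    then show "norm (induced_phase L y p) = 1" using phase by force
  qed (rule group_uniformly_continuous_induced_phase[OF sgL sgD ccD dual])
  then obtain \<eta> where \<eta>: "character \<eta>" "\<forall>l\<in>L. \<eta> (snd l) = e2pi (- (y \<bullet> fst l))"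
    using phase by auto
  have "cis (2 * pi * (y \<bullet> x)) * \<eta> h = 1" if "(x, h) \<in> L" for x h
    using \<eta>(2) that e2pi_add[of "y \<bullet> x" "- (y \<bullet> x)"] e2pi_int[of 0] by (force simp: e2pi_def)
  then show ?thesis using \<eta>(1) unfolding annihilator_def by blast
qed

lemma closed_add_subgroup_fst_section:
  fixes C :: "('a::topological_ab_group_add \<times> 'b::topological_ab_group_add) set"
  assumes cC: "closed C" and sgC: "add_subgroup C"
  shows "closed {v. (v, 0) \<in> C}" "add_subgroup {v. (v, 0) \<in> C}"
proof -
  have "{v. (v, 0) \<in> C} = (\<lambda>v. (v, 0)) -` C" by auto
  moreover have "continuous_on UNIV (\<lambda>v::'a. (v, 0::'b))"
    by (intro continuous_intros)
  ultimately show "closed {v. (v, 0) \<in> C}"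
    using closed_vimage cC by metis
  show "add_subgroup {v. (v, 0) \<in> C}"
    unfolding add_subgroup_def
  proof (intro conjI ballI; simp)
    show "(0, 0) \<in> C" using sgC unfolding add_subgroup_def zero_prod_def by blast
  next
    fix a b assume "(a, 0) \<in> C" "(b, 0) \<in> C"
    then show "(a + b, 0) \<in> C" "(- a, 0) \<in> C"
      using sgC unfolding add_subgroup_def by (metis add_Pair add_0, metis uminus_Pair minus_zero)
  qed
qed

lemma fst_section_closure_fst_translates:
  fixes L :: "((real^'n::finite) \<times> 'h::topological_ab_group_add) set"
  assumes sgL: "add_subgroup L" and dense: "closure (snd ` L) = UNIV" and latD: "lattice D"
    and no_dual: "dual_lattice D \<inter> fst ` annihilator L = {0}"
  shows "(v, 0) \<in> closure (fst_translates L D)"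
proof -
  define V where "V = {v. (v, 0) \<in> closure (fst_translates L D)}"
  have sgD: "add_subgroup D" and ccD: "cocompact_set D"
    using latD unfolding lattice_def by auto
  have "closed V" "add_subgroup V"
    unfolding V_def using closed_add_subgroup_fst_section[OF closed_closure]
      add_subgroup_closure_prod[OF add_subgroup_fst_translates[OF sgL sgD]] by blast+
  have "D \<subseteq> V"
    using fst_translates_zero[of L] sgL closure_subset unfolding V_def add_subgroup_def by blast
  have "V = UNIV"
  proof (rule ccontr)
    assume "V \<noteq> UNIV"
    then obtain y where "y \<noteq> 0" and dual: "\<forall>v\<in>V. y \<bullet> v \<in> \<int>"
      using closed_subgroup_dual[OF subspace_UNIV \<open>closed V\<close> \<open>add_subgroup V\<close>] by blast
    then have "y \<in> dual_lattice D"
      using \<open>D \<subseteq> V\<close> by (auto simp: dual_lattice_def inner_commute)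
    moreover have "y \<in> fst ` annihilator L"
      using annihilator_if_dual_to_section[OF sgL dense sgD ccD, of y] dual unfolding V_def by force
    ultimately show False using no_dual \<open>y \<noteq> 0\<close> by blast
  qed
  then show ?thesis unfolding V_def by blast
qed

lemma closure_fst_translates_eq_UNIV:
  fixes L :: "((real^'n::finite) \<times> 'h::topological_ab_group_add) set"
  assumes sgL: "add_subgroup L" and dense: "closure (snd ` L) = UNIV" and latD: "lattice D"
    and no_dual: "dual_lattice D \<inter> fst ` annihilator L = {0}"
  shows "closure (fst_translates L D) = UNIV"
proof -
  let ?C = "closure (fst_translates L D)"
  have sgD: "add_subgroup D" using latD unfolding lattice_def by blast
  have sgC: "add_subgroup ?C"
    by (intro add_subgroup_closure_prod add_subgroup_fst_translates sgL sgD)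
  have "L \<subseteq> ?C"
    using subset_fst_translates[of D L] sgD closure_subset unfolding add_subgroup_def by blast
  have "(x, snd l) \<in> ?C" if "l \<in> L" for x l
  proof -
    have "l - (fst l - x, 0) \<in> ?C"
      using add_subgroup_diff[OF sgC] \<open>L \<subseteq> ?C\<close> that fst_section_closure_fst_translates[OF assms]
      by blast
    moreover have "l - (fst l - x, 0) = (x, snd l)"
      by (simp add: prod_eq_iff)
    ultimately show ?thesis by simp
  qed
  then have "closure (UNIV \<times> snd ` L) \<subseteq> ?C"
    by (intro closure_minimal) auto
  then show ?thesis using dense by (auto simp: closure_Times)
qed

lemma coset_map_add_lattice:
  assumes "add_subgroup D" "d \<in> D"
  shows "coset_map D (x + d) = coset_map D x"
  unfolding coset_map_def
proof (intro equalityI image_subsetI)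
  fix e assume "e \<in> D"
  then have "d + e \<in> D" "e - d \<in> D"
    using assms add_subgroup_diff unfolding add_subgroup_def by blast+
  then show "x + d + e \<in> (\<lambda>e. x + e) ` D" "x + e \<in> (\<lambda>e. x + d + e) ` D"
    by (force simp: add.assoc)+
qed

lemma star_map_fst:
  assumes "inj_on fst L" "l \<in> L"
  shows "star_map L (fst l) = snd l"
proof -
  have "(THE z. z \<in> L \<and> fst z = fst l) = l"
    using assms by (intro the_equality) (auto simp: inj_on_def)
  then show ?thesis unfolding star_map_def by simp
qed

lemma continuous_map_snd_coset_map:
  assumes "quotient_map euclidean KT (coset_map D)"
  shows "continuous_map euclidean (prod_topology euclidean KT)
    (\<lambda>z :: (real^'n::finite) \<times> 'h::topological_space. (snd z, coset_map D (fst z)))"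
proof -
  have "continuous_map euclidean KT (coset_map D \<circ> (fst :: (real^'n) \<times> 'h \<Rightarrow> real^'n))"
    using continuous_map_fst[of euclidean euclidean, unfolded prod_topology_euclidean]
    by (rule continuous_map_compose[OF _ quotient_imp_continuous_map[OF assms]])
  then show ?thesis
    using continuous_map_snd[of euclidean euclidean, unfolded prod_topology_euclidean]
    unfolding o_def by (intro continuous_map_pairedI)
qed

lemma range_snd_coset_map:
  assumes "quotient_map euclidean KT (coset_map D)"
  shows "range (\<lambda>z :: (real^'n::finite) \<times> 'h::topological_space. (snd z, coset_map D (fst z)))
    = topspace (prod_topology euclidean KT)"
proof -
  have "range (\<lambda>z :: (real^'n) \<times> 'h. (snd z, coset_map D (fst z))) = UNIV \<times> range (coset_map D)"
  proof (intro equalityI subsetI)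
    fix z assume "z \<in> (UNIV :: 'h set) \<times> range (coset_map D)"
    then obtain h :: 'h and x where "z = (h, coset_map D x)" by blast
    then have "z = (\<lambda>z :: (real^'n) \<times> 'h. (snd z, coset_map D (fst z))) (x, h)"
      by simp
    then show "z \<in> range (\<lambda>z :: (real^'n) \<times> 'h. (snd z, coset_map D (fst z)))"
      by blast
  qed auto
  then show ?thesis using assms by (simp add: quotient_map_def)
qed

lemma snd_coset_map_fst_translates:
  assumes "inj_on fst L" "add_subgroup D"
  shows "(\<lambda>z. (snd z, coset_map D (fst z))) ` fst_translates L D
    \<subseteq> (\<lambda>x. (star_map L x, coset_map D x)) ` fst ` L"
proof
  fix z assume "z \<in> (\<lambda>z. (snd z, coset_map D (fst z))) ` fst_translates L D"
  then obtain l d where l: "l \<in> L" "d \<in> D" "z = (snd (l + (d, 0)), coset_map D (fst (l + (d, 0))))"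
    unfolding fst_translates_def by blast
  then have "z = (star_map L (fst l), coset_map D (fst l))"
    using star_map_fst[OF assms(1)] coset_map_add_lattice[OF assms(2)] by simp
  then show "z \<in> (\<lambda>x. (star_map L x, coset_map D x)) ` fst ` L"
    using l(1) by blast
qed

lemma closure_of_continuous_image_dense:
  assumes "continuous_map X Y g" "g ` topspace X = topspace Y"
    and "X closure_of A = topspace X" "g ` A \<subseteq> B"
  shows "Y closure_of B = topspace Y"
proof -
  have "topspace Y \<subseteq> Y closure_of (g ` A)"
    using continuous_map_image_closure_subset[OF assms(1), of A] assms(2,3) by simp
  also have "\<dots> \<subseteq> Y closure_of B"
    using assms(4) by (rule closure_of_mono)
  finally show ?thesis using closure_of_subset_topspace[of Y B] by blast
qed

theorem lemma6p4:
  fixes L :: "((real^'n::finite) \<times> 'h::{topological_ab_group_add, t2_space}) set"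
    and D :: "(real^'n::finite) set"
    and KT :: "(real^'n::finite) set topology"
  assumes cps: "cut_and_project L"
    and cL: "countable L"
    and cLo: "countable (annihilator L)"
    and latD: "lattice D"
    and D1: "D \<inter> fst ` L = {0}"
    and D2: "dual_lattice D \<inter> fst ` annihilator L = {0}"
    and KT: "quotient_map euclidean KT (coset_map D)"
  shows "(prod_topology euclidean KT) closure_of
           ((\<lambda>x. (star_map L x, coset_map D x)) ` (fst ` L))
         = topspace (prod_topology euclidean KT)"
proof -
  have sgL: "add_subgroup L" and inj: "inj_on fst L" and dense: "closure (snd ` L) = UNIV"
    using cps unfolding cut_and_project_def by blast+
  have sgD: "add_subgroup D" using latD unfolding lattice_def by blast
  have "euclidean closure_of fst_translates L D = topspace euclidean"
    using closure_fst_translates_eq_UNIV[OF sgL dense latD D2] by simp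
  then show ?thesis
    using closure_of_continuous_image_dense[OF continuous_map_snd_coset_map[OF KT]]
      range_snd_coset_map[OF KT] snd_coset_map_fst_translates[OF inj sgD] by simp
qed

end
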